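(* Let $(X,\tau)$ be a $T_1$ topological space. Then $X$ is a D-space if and only if for every continuous map $f:(X,\tau)\to(\mathcal P(X),\tau_{\mathcal S(X)})$ with $x\in f(x)$ for all $x\in X$, there exist a continuous neighborhood refinement map $f_*$ of $f$ and a set $D\subseteq X$ such that the map $g:(X,\tau)\to(\mathcal P(D),\tau_{\mathcal S(D)})$, $g(x)=f_*(x)\cap D$, is continuous, satisfies $g^{-1}(\{\emptyset\})=\emptyset$, and satisfies $g(d)=\{d\}$ for all $d\in D$.
   Context: For a set $A$ and $a\in A$, let $\mathcal U_A(a)=\{B\subseteq A: a\in B\}$. The principal ultrafilter topology $\tau_{\mathcal S(A)}$ on $\mathcal P(A)$ is the topology generated by the subbase $\{\mathcal U_A(a): a\in A\}$. Given a continuous map $f:(X,\tau)\to(\mathcal P(X),\tau_{\mathcal S(X)})$ with $x\in f(x)$ for all $x$, a continuous neighborhood refinement map of $f$ is a continuous map $f_*:(X,\tau)\to(\mathcal P(X),\tau_{\mathcal S(X)})$ with $x\in f_*(x)\subseteq f(x)$ for all $x$. An open neighborhood assignment is a function $N:X\to\tau$ with $x\in N(x)$ for all $x$. $X$ is a D-space if for every open neighborhood assignment $N$ there is a closed discrete $D\subseteq X$ with $\bigcup_{d\in D}N(d)=X$. *)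

theory Defs
  imports "HOL-Analysis.Analysis"
begin

definition pu_set :: "'a set \<Rightarrow> 'a \<Rightarrow> 'a set set" where
  "pu_set A a = {B. B \<subseteq> A \<and> a \<in> B}"

text \<open>Principal ultrafilter topology on Pow A, generated by the subbase {U_A(a). a \<in> A}
  (finite intersections, the empty one giving Pow A, then arbitrary unions).\<close>
definition pu_topology :: "'a set \<Rightarrow> 'a set topology" where
  "pu_topology A = topology (arbitrary union_of
      (finite intersection_of (\<lambda>U. \<exists>a\<in>A. U = pu_set A a) relative_to Pow A))"

definition open_nbhd_assignment :: "'a topology \<Rightarrow> ('a \<Rightarrow> 'a set) \<Rightarrow> bool" where
  "open_nbhd_assignment X N \<longleftrightarrow> (\<forall>x\<in>topspace X. openin X (N x) \<and> x \<in> N x)"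

definition closed_discrete :: "'a topology \<Rightarrow> 'a set \<Rightarrow> bool" where
  "closed_discrete X D \<longleftrightarrow> D \<subseteq> topspace X \<and> closedin X D \<and>
     subtopology X D = discrete_topology D"

definition D_space :: "'a topology \<Rightarrow> bool" where
  "D_space X \<longleftrightarrow> (\<forall>N. open_nbhd_assignment X N \<longrightarrow>
      (\<exists>D. closed_discrete X D \<and> (\<Union>d\<in>D. N d) = topspace X))"

definition nbhd_refinement_map :: "'a topology \<Rightarrow> ('a \<Rightarrow> 'a set) \<Rightarrow> ('a \<Rightarrow> 'a set) \<Rightarrow> bool" where
  "nbhd_refinement_map X f fs \<longleftrightarrow>
     continuous_map X (pu_topology (topspace X)) fs \<and>
     (\<forall>x\<in>topspace X. x \<in> fs x \<and> fs x \<subseteq> f x)"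

end

theory Submission imports Defs begin

text \<open>A map into \<open>\<P>(A)\<close> with the principal ultrafilter topology is the same thing as a
  family of open sets \<open>{x. a \<in> g x}\<close> indexed by \<open>a \<in> A\<close>, i.e. an open neighbourhood assignment
  read backwards. For a D-space one thins \<open>f\<close> out so that points of the closed discrete set \<open>D\<close>
  see no other point of \<open>D\<close>: this keeps continuity because every subset of \<open>D\<close> is closed.
  Conversely the sets \<open>{x. d \<in> f\<^sub>* x}\<close>, \<open>d \<in> D\<close>, are open, cover \<open>X\<close> and meet \<open>D\<close> only in \<open>d\<close>;
  this makes \<open>D\<close> discrete, and in a \<open>T\<^sub>1\<close> space also closed.\<close>

lemma continuous_map_pu_topology_iff:
  "continuous_map X (pu_topology A) g \<longleftrightarrow>
   (\<forall>x\<in>topspace X. g x \<subseteq> A) \<and> (\<forall>a\<in>A. openin X {x \<in> topspace X. a \<in> g x})"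
proof -
  have subbase: "continuous_map X (pu_topology A) g \<longleftrightarrow>
    g \<in> topspace X \<rightarrow> Pow A \<and> (\<forall>U. (\<exists>a\<in>A. U = pu_set A a) \<longrightarrow> openin X {x \<in> topspace X. g x \<in> U})"
    using continuous_map_into_topology_subbase_eq[OF pu_topology_def] unfolding pu_topology_def
    by simp
  show ?thesis
  proof
    assume L: "continuous_map X (pu_topology A) g"
    then have into_A: "\<forall>x\<in>topspace X. g x \<subseteq> A" using subbase by auto
    moreover have "openin X {x \<in> topspace X. a \<in> g x}" if "a \<in> A" for a
    proof -
      have "openin X {x \<in> topspace X. g x \<in> pu_set A a}" using L subbase that by blast
      moreover have "{x \<in> topspace X. g x \<in> pu_set A a} = {x \<in> topspace X. a \<in> g x}"
        using into_A by (auto simp: pu_set_def)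
      ultimately show ?thesis by simp
    qed
    ultimately show "(\<forall>x\<in>topspace X. g x \<subseteq> A) \<and> (\<forall>a\<in>A. openin X {x \<in> topspace X. a \<in> g x})" by blast
  next
    assume R: "(\<forall>x\<in>topspace X. g x \<subseteq> A) \<and> (\<forall>a\<in>A. openin X {x \<in> topspace X. a \<in> g x})"
    have "openin X {x \<in> topspace X. g x \<in> U}" if hU: "\<exists>a\<in>A. U = pu_set A a" for U
    proof -
      obtain a where a: "a \<in> A" "U = pu_set A a" using hU by blast
      have "{x \<in> topspace X. g x \<in> U} = {x \<in> topspace X. a \<in> g x}"
        using R a by (auto simp: pu_set_def)
      then show ?thesis using R a by simp
    qed
    then show "continuous_map X (pu_topology A) g" using subbase R by auto
  qed
qed

lemma continuous_map_pu_topology_Int: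
  assumes "continuous_map X (pu_topology A) g" "B \<subseteq> A"
  shows "continuous_map X (pu_topology B) (\<lambda>x. g x \<inter> B)"
  unfolding continuous_map_pu_topology_iff
proof (intro conjI ballI)
  fix a assume "a \<in> B"
  then have "{x \<in> topspace X. a \<in> g x \<inter> B} = {x \<in> topspace X. a \<in> g x}"
    by blast
  then show "openin X {x \<in> topspace X. a \<in> g x \<inter> B}"
    using assms \<open>a \<in> B\<close> by (simp add: continuous_map_pu_topology_iff subset_iff)
qed blast

lemma continuous_map_pu_topology_nbhd_assignment:
  assumes "open_nbhd_assignment X N"
  shows "continuous_map X (pu_topology (topspace X)) (\<lambda>x. {a \<in> topspace X. x \<in> N a})"
proof -
  have "{x \<in> topspace X. a \<in> {a \<in> topspace X. x \<in> N a}} = N a" if "a \<in> topspace X" for a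
    using assms that openin_subset by (fastforce simp: open_nbhd_assignment_def)
  then show ?thesis
    using assms by (auto simp: continuous_map_pu_topology_iff open_nbhd_assignment_def)
qed

lemma closedin_subset_closed_discrete:
  assumes "closed_discrete X D" "S \<subseteq> D"
  shows "closedin X S"
proof -
  have "closedin (subtopology X D) S"
    using assms by (simp add: closed_discrete_def)
  moreover have "closedin X D"
    using assms(1) by (simp add: closed_discrete_def)
  ultimately show ?thesis
    by (rule closedin_trans_full)
qed

definition isolating_refinement :: "'a set \<Rightarrow> ('a \<Rightarrow> 'a set) \<Rightarrow> 'a \<Rightarrow> 'a set" where
  "isolating_refinement D f x = {a \<in> f x. a \<in> D \<longrightarrow> x \<in> D \<longrightarrow> x = a}"

lemma isolating_refinement_subset: "isolating_refinement D f x \<subseteq> f x"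
  by (auto simp: isolating_refinement_def)

lemma isolating_refinement_Int_self:
  "d \<in> D \<Longrightarrow> d \<in> f d \<Longrightarrow> isolating_refinement D f d \<inter> D = {d}"
  by (auto simp: isolating_refinement_def)

lemma continuous_map_isolating_refinement:
  assumes "closed_discrete X D" "continuous_map X (pu_topology A) f"
  shows "continuous_map X (pu_topology A) (isolating_refinement D f)"
  unfolding continuous_map_pu_topology_iff
proof (intro conjI ballI)
  fix a assume "a \<in> A"
  then have open_a: "openin X {x \<in> topspace X. a \<in> f x}"
    using assms(2) by (simp add: continuous_map_pu_topology_iff)
  show "openin X {x \<in> topspace X. a \<in> isolating_refinement D f x}"
  proof (cases "a \<in> D")
    case True
    have "closedin X (D - {a})"
      using assms(1) by (rule closedin_subset_closed_discrete) blast
    then have "openin X (topspace X - (D - {a}))"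
      by (rule openin_diff[OF openin_topspace])
    moreover have "{x \<in> topspace X. a \<in> isolating_refinement D f x} =
          {x \<in> topspace X. a \<in> f x} \<inter> (topspace X - (D - {a}))"
      using True by (auto simp: isolating_refinement_def)
    ultimately show ?thesis
      using open_a openin_Int by simp
  next
    case False
    then show ?thesis
      using open_a by (simp add: isolating_refinement_def)
  qed
next
  fix x assume "x \<in> topspace X"
  then have "f x \<subseteq> A"
    using assms(2) by (simp add: continuous_map_pu_topology_iff)
  then show "isolating_refinement D f x \<subseteq> A"
    by (rule subset_trans[OF isolating_refinement_subset])
qed

lemma closed_discrete_if_isolating_cover:
  assumes "t1_space X" "D \<subseteq> topspace X"
    and open_U: "\<And>d. d \<in> D \<Longrightarrow> openin X (U d)"
    and isolate: "\<And>d. d \<in> D \<Longrightarrow> U d \<inter> D = {d}"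
    and cover: "topspace X \<subseteq> (\<Union>d\<in>D. U d)"
  shows "closed_discrete X D"
proof -
  have "subtopology X D = discrete_topology D"
  proof (rule discrete_topology_unique_alt[THEN iffD2, symmetric], intro conjI ballI)
    fix d assume "d \<in> D"
    then show "openin (subtopology X D) {d}"
      using openin_subtopology_Int[OF open_U] isolate by metis
  qed simp
  moreover have "openin X (topspace X - D)"
  proof (subst openin_subopen, intro ballI)
    fix x assume x: "x \<in> topspace X - D"
    then obtain d where d: "d \<in> D" "x \<in> U d"
      using cover by blast
    have "closedin X {d}"
      using assms(1,2) d(1) by (auto simp: t1_space_closedin_singleton)
    then have "openin X (U d - {d})"
      using open_U[OF d(1)] by (simp add: openin_diff)
    moreover have "U d - {d} \<subseteq> topspace X - D"
      using isolate[OF d(1)] openin_subset[OF open_U[OF d(1)]] by blast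
    ultimately show "\<exists>T. openin X T \<and> x \<in> T \<and> T \<subseteq> topspace X - D"
      using x d by blast
  qed
  ultimately show ?thesis
    using assms(2) by (simp add: closed_discrete_def closedin_def)
qed

lemma D_space_imp_isolating_refinement:
  assumes "D_space X" and f: "continuous_map X (pu_topology (topspace X)) f"
    and self: "\<forall>x\<in>topspace X. x \<in> f x"
  shows "\<exists>fs D. nbhd_refinement_map X f fs \<and> D \<subseteq> topspace X \<and>
           continuous_map X (pu_topology D) (\<lambda>x. fs x \<inter> D) \<and>
           (\<forall>x\<in>topspace X. fs x \<inter> D \<noteq> {}) \<and>
           (\<forall>d\<in>D. fs d \<inter> D = {d})"
proof -
  define N where "N a = {x \<in> topspace X. a \<in> f x}" for a
  have "open_nbhd_assignment X N"
    using f self by (auto simp: open_nbhd_assignment_def N_def continuous_map_pu_topology_iff)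
  then obtain D where D: "closed_discrete X D" and cover: "(\<Union>d\<in>D. N d) = topspace X"
    using assms(1) unfolding D_space_def by blast
  define fs where "fs = isolating_refinement D f"
  have DX: "D \<subseteq> topspace X"
    using D by (simp add: closed_discrete_def)
  have fs: "continuous_map X (pu_topology (topspace X)) fs"
    unfolding fs_def using D f by (rule continuous_map_isolating_refinement)
  have "fs x \<inter> D \<noteq> {}" if x: "x \<in> topspace X" for x
  proof (cases "x \<in> D")
    case True
    then show ?thesis
      using self x by (auto simp: fs_def isolating_refinement_def)
  next
    case False
    then obtain d where "d \<in> D" "x \<in> N d"
      using cover x by blast
    then show ?thesis
      using False by (auto simp: fs_def isolating_refinement_def N_def)
  qed
  moreover have "nbhd_refinement_map X f fs"
    using fs self by (auto simp: nbhd_refinement_map_def fs_def isolating_refinement_def)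
  moreover have "fs d \<inter> D = {d}" if "d \<in> D" for d
    unfolding fs_def using that DX self by (intro isolating_refinement_Int_self) auto
  ultimately show ?thesis
    using DX continuous_map_pu_topology_Int[OF fs DX] by blast
qed

lemma isolating_refinement_imp_D_space:
  assumes "t1_space X"
    and refine: "\<And>f. continuous_map X (pu_topology (topspace X)) f \<Longrightarrow> \<forall>x\<in>topspace X. x \<in> f x \<Longrightarrow>
      \<exists>fs D. nbhd_refinement_map X f fs \<and> D \<subseteq> topspace X \<and>
        (\<forall>x\<in>topspace X. fs x \<inter> D \<noteq> {}) \<and> (\<forall>d\<in>D. fs d \<inter> D = {d})"
  shows "D_space X"
  unfolding D_space_def
proof (intro allI impI)
  fix N assume N: "open_nbhd_assignment X N"
  define f where "f x = {a \<in> topspace X. x \<in> N a}" for x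
  have f_cont: "continuous_map X (pu_topology (topspace X)) f"
    unfolding f_def using N by (rule continuous_map_pu_topology_nbhd_assignment)
  have f_self: "\<forall>x\<in>topspace X. x \<in> f x"
    using N by (auto simp: f_def open_nbhd_assignment_def)
  obtain fs D where fs: "nbhd_refinement_map X f fs" and DX: "D \<subseteq> topspace X"
    and meets: "\<forall>x\<in>topspace X. fs x \<inter> D \<noteq> {}" and isolated: "\<forall>d\<in>D. fs d \<inter> D = {d}"
    using refine[OF f_cont f_self] by (elim exE conjE) (rule that)
  define U where "U d = {x \<in> topspace X. d \<in> fs x}" for d
  have fs_cont: "continuous_map X (pu_topology (topspace X)) fs"
    and fs_sub: "\<forall>x\<in>topspace X. x \<in> fs x \<and> fs x \<subseteq> f x"
    using fs by (auto simp: nbhd_refinement_map_def)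
  have "closed_discrete X D"
  proof (rule closed_discrete_if_isolating_cover[OF assms(1) DX])
    show "openin X (U d)" if "d \<in> D" for d
      using fs_cont DX that unfolding U_def continuous_map_pu_topology_iff by blast
    show "U d \<inter> D = {d}" if d: "d \<in> D" for d
    proof
      show "U d \<inter> D \<subseteq> {d}"
      proof
        fix x assume x: "x \<in> U d \<inter> D"
        then have "d \<in> fs x \<inter> D"
          using d by (simp add: U_def)
        then show "x \<in> {d}"
          using isolated x by auto
      qed
      show "{d} \<subseteq> U d \<inter> D"
        using d DX fs_sub by (simp add: U_def subset_iff)
    qed
    show "topspace X \<subseteq> (\<Union>d\<in>D. U d)"
      using meets unfolding U_def by blast
  qed
  moreover have "(\<Union>d\<in>D. N d) = topspace X"
  proof
    show "(\<Union>d\<in>D. N d) \<subseteq> topspace X"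
      using N DX openin_subset unfolding open_nbhd_assignment_def by blast
    show "topspace X \<subseteq> (\<Union>d\<in>D. N d)"
      using meets fs_sub unfolding f_def by blast
  qed
  ultimately show "\<exists>D. closed_discrete X D \<and> (\<Union>d\<in>D. N d) = topspace X"
    by blast
qed

theorem mainTheorem2:
  fixes X :: "'a topology"
  assumes "t1_space X"
  shows "D_space X \<longleftrightarrow>
    (\<forall>f. continuous_map X (pu_topology (topspace X)) f \<and> (\<forall>x\<in>topspace X. x \<in> f x) \<longrightarrow>
      (\<exists>fs D. nbhd_refinement_map X f fs \<and> D \<subseteq> topspace X \<and>
         continuous_map X (pu_topology D) (\<lambda>x. fs x \<inter> D) \<and>
         (\<forall>x\<in>topspace X. fs x \<inter> D \<noteq> {}) \<and>
         (\<forall>d\<in>D. fs d \<inter> D = {d})))"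
  (is "_ \<longleftrightarrow> ?refinable")
proof
  assume "D_space X"
  then show ?refinable
    by (intro allI impI, elim conjE) (rule D_space_imp_isolating_refinement)
next
  assume ?refinable
  then show "D_space X"
    by (intro isolating_refinement_imp_D_space[OF assms])
       (drule spec, drule mp, erule (1) conjI, elim exE conjE, intro exI conjI)
qed

end
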